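(* Let $C$ be a finite set of level constraints in normal form with $\mathcal{I}(C) \cap \mathcal{I}_{fresh} = \emptyset$. If $C; id \leadsto^* \bot$ by a finite sequence of unification steps, then there is no level substitution $\theta$ with $\theta \vDash C$.
   Context: Levels: $l ::= i \mid \mathtt{z} \mid \mathtt{s}\,l \mid l \sqcup l'$, $i$ in an infinite totally ordered set $\mathcal{I}$ of level variables; $\simeq$ is the smallest congruence (closed under constructors and substitution of levels for variables) containing $i_1 \sqcup (i_2 \sqcup i_3) \approx (i_1 \sqcup i_2) \sqcup i_3$, $i_1 \sqcup i_2 \approx i_2 \sqcup i_1$, $\mathtt{s}(i_1 \sqcup i_2) \approx \mathtt{s}\,i_1 \sqcup \mathtt{s}\,i_2$, $i \sqcup \mathtt{s}\,i \approx \mathtt{s}\,i$, $i \sqcup \mathtt{z} \approx i$, $i \sqcup i \approx i$. Normal form of levels: $\mathtt{s}^k\,\mathtt{z} \sqcup (\sqcup_{i \in V} \mathtt{s}^{n_i}\,i)$ with $V$ a strictly increasing sequence of variables, $n_i \le k$; every $l$ has a unique normal form $\hat l \simeq l$. A constraint $l_1 = l_2$ is in normal form if both sides are in normal form, each variable occurring on both sides has the same exponent on both sides, and at least one exponent (of $\mathtt{z}$ or of a variable, on either side) is $0$; $\widehat{C}$ denotes putting each constraint of $C$ in normal form (normalize both sides, for a variable on both sides drop the occurrence with smaller exponent, then subtract the minimum exponent from all exponents). $\theta \vDash C$ means $l_1\theta \simeq l_2\theta$ for all $l_1 = l_2 \in C$. $id$ is the identity substitution. For substitutions: $dom\,\theta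 = \{i \mid i\theta \ne i\}$; $\mathcal{I}(l)$ is the set of variables of $l$; $range\,\theta = \bigcup_{i \in dom\,\theta} \mathcal{I}(i\theta)$; $\mathcal{I}(\theta) = dom\,\theta \cup range\,\theta$; $\widehat{\theta} = \{i \mapsto \widehat{i\theta}\}_{i \in dom\,\theta}$; $\theta\{l/j\} = \{i \mapsto (i\theta)\{l/j\}\}_{i \in dom\,\theta}$; $\mathcal{I}_{fresh} \subsetneq \mathcal{I}$ is a fixed infinite set of fresh variables. In normal-form levels, $\mathtt{z} \sqcup i$ means $\mathtt{s}^0\mathtt{z} \sqcup \mathtt{s}^0 i$, and "$\mathtt{s}^m\,x \in l$" means $\mathtt{s}^m\,x$ is a summand of $l$. The unification steps on pairs $C;\theta$ are: (Trivial) $\{l = l\} \cup C; \theta \leadsto C; \theta$. (Orient) $\{l = l'\} \cup C; \theta \leadsto \{l' = l\} \cup C; \theta$ if $l'$ is $\mathtt{z}$ or $\mathtt{z} \sqcup i$. (Eliminate 1) $\{\mathtt{z} \sqcup i = l\} \cup C; \theta \leadsto \widehat{C\{l/i\}}; (\widehat{\theta\{l/i\}}, i \mapsto l)$ if $i$ does not occur in $l$. (Eliminate 2) $\{\mathtt{z} \sqcup i = l\} \cup C; \theta \leadsto \widehat{C\{l'/i\}}; (\widehat{\theta\{l'/i\}}, i \mapsto l')$ where $l' = l\{i'/i\}$ for some $i' \in \mathcal{I}_{fresh} \setminus \mathcal{I}(i, l, C, \theta)$, if $\mathtt{s}^0\,i \in l$. (Decompose) $\{\mathtt{z} = \mathtt{z}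 \sqcup (\sqcup_{i \in V} i)\} \cup C; \theta \leadsto \{\mathtt{z} \sqcup i = \mathtt{z}\}_{i \in V} \cup C; \theta$. (Clash) $\{\mathtt{z} = l\} \cup C; \theta \leadsto \bot$ if $\mathtt{s}^n\,i \in l$ or $\mathtt{s}^n\,\mathtt{z} \in l$ for some $n \ne 0$. *)

theory Defs
  imports Main
begin

datatype 'v lvl = LVar 'v | LZ | LS "'v lvl" | LMax "'v lvl" "'v lvl"

definition spow :: "nat \<Rightarrow> 'v lvl \<Rightarrow> 'v lvl" where
  "spow n l = (LS ^^ n) l"

text \<open>The congruence \<open>\<simeq>\<close>: smallest congruence containing all instances of the axioms
  (closure under substitution is obtained by taking all instances).\<close>
inductive leqv :: "'v lvl \<Rightarrow> 'v lvl \<Rightarrow> bool" where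
  lrefl: "leqv l l"
| lsym: "leqv a b \<Longrightarrow> leqv b a"
| ltrans: "leqv a b \<Longrightarrow> leqv b c \<Longrightarrow> leqv a c"
| lcongS: "leqv a b \<Longrightarrow> leqv (LS a) (LS b)"
| lcongMax: "leqv a a' \<Longrightarrow> leqv b b' \<Longrightarrow> leqv (LMax a b) (LMax a' b')"
| lassoc: "leqv (LMax a (LMax b c)) (LMax (LMax a b) c)"
| lcomm: "leqv (LMax a b) (LMax b a)"
| lsdist: "leqv (LS (LMax a b)) (LMax (LS a) (LS b))"
| labsorb: "leqv (LMax a (LS a)) (LS a)"
| lzero: "leqv (LMax a LZ) a"
| lidem: "leqv (LMax a a) a"

fun lvars :: "'v lvl \<Rightarrow> 'v set" where
  "lvars (LVar i) = {i}"
| "lvars LZ = {}"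
| "lvars (LS l) = lvars l"
| "lvars (LMax a b) = lvars a \<union> lvars b"

fun lsubst :: "('v \<Rightarrow> 'v lvl) \<Rightarrow> 'v lvl \<Rightarrow> 'v lvl" where
  "lsubst \<sigma> (LVar i) = \<sigma> i"
| "lsubst \<sigma> LZ = LZ"
| "lsubst \<sigma> (LS l) = LS (lsubst \<sigma> l)"
| "lsubst \<sigma> (LMax a b) = LMax (lsubst \<sigma> a) (lsubst \<sigma> b)"

definition lsubst1 :: "'v lvl \<Rightarrow> 'v lvl \<Rightarrow> 'v \<Rightarrow> 'v lvl" where
  "lsubst1 l l' j = lsubst (LVar(j := l')) l"

fun summands :: "'v lvl \<Rightarrow> 'v lvl set" where
  "summands (LMax a b) = summands a \<union> summands b"
| "summands l = {l}"

text \<open>Normal-form data \<open>(k, [(i1,n1),...,(im,nm)])\<close> standing for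
  \<open>s^k z \<squnion> (s^n1 i1 \<squnion> (... \<squnion> s^nm im))\<close>.\<close>
type_synonym 'v nfdata = "nat \<times> ('v \<times> nat) list"

fun joinr :: "'v lvl list \<Rightarrow> 'v lvl" where
  "joinr [] = LZ"
| "joinr [x] = x"
| "joinr (x # xs) = LMax x (joinr xs)"

definition lvl_of :: "('v::linorder) nfdata \<Rightarrow> 'v lvl" where
  "lvl_of d = (case d of (k, xs) \<Rightarrow>
     (if xs = [] then spow k LZ
      else LMax (spow k LZ) (joinr (map (\<lambda>(i, n). spow n (LVar i)) xs))))"

definition nf_wf :: "('v::linorder) nfdata \<Rightarrow> bool" where
  "nf_wf d = (case d of (k, xs) \<Rightarrow>
     sorted_wrt (<) (map fst xs) \<and> (\<forall>(i, n) \<in> set xs. n \<le> k))"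

definition is_nf :: "('v::linorder) lvl \<Rightarrow> bool" where
  "is_nf l = (\<exists>d. nf_wf d \<and> l = lvl_of d)"

definition nf_data :: "('v::linorder) lvl \<Rightarrow> 'v nfdata" where
  "nf_data l = (THE d. nf_wf d \<and> leqv (lvl_of d) l)"

definition lhat :: "('v::linorder) lvl \<Rightarrow> 'v lvl" where
  "lhat l = lvl_of (nf_data l)"

type_synonym 'v constr = "'v lvl \<times> 'v lvl"

definition c_nf :: "('v::linorder) constr \<Rightarrow> bool" where
  "c_nf c = (\<exists>k1 xs1 k2 xs2.
      nf_wf (k1, xs1) \<and> nf_wf (k2, xs2) \<and> c = (lvl_of (k1, xs1), lvl_of (k2, xs2)) \<and>
      (\<forall>i n m. (i, n) \<in> set xs1 \<longrightarrow> (i, m) \<in> set xs2 \<longrightarrow> n = m) \<and>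
      (k1 = 0 \<or> k2 = 0 \<or> (\<exists>(i, n) \<in> set xs1 \<union> set xs2. n = 0)))"

definition drop_smaller :: "('v \<times> nat) list \<Rightarrow> ('v \<times> nat) list \<Rightarrow> ('v \<times> nat) list" where
  "drop_smaller xs ys = filter (\<lambda>(i, n). \<not> (\<exists>m. (i, m) \<in> set ys \<and> n < m)) xs"

definition chat :: "('v::linorder) constr \<Rightarrow> 'v constr" where
  "chat c = (case (nf_data (fst c), nf_data (snd c)) of ((k1, xs1), (k2, xs2)) \<Rightarrow>
     let ys1 = drop_smaller xs1 xs2; ys2 = drop_smaller xs2 xs1;
         m = Min ({k1, k2} \<union> snd ` set ys1 \<union> snd ` set ys2);
         sub = map (\<lambda>(i, n). (i, n - m))
     in (lvl_of (k1 - m, sub ys1), lvl_of (k2 - m, sub ys2)))"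

definition Chat :: "('v::linorder) constr set \<Rightarrow> 'v constr set" where
  "Chat C = chat ` C"

definition Csubst1 :: "'v constr set \<Rightarrow> 'v lvl \<Rightarrow> 'v \<Rightarrow> 'v constr set" where
  "Csubst1 C l j = (\<lambda>(a, b). (lsubst1 a l j, lsubst1 b l j)) ` C"

definition Cvars :: "'v constr set \<Rightarrow> 'v set" where
  "Cvars C = (\<Union>(a, b) \<in> C. lvars a \<union> lvars b)"

definition sat :: "('v \<Rightarrow> 'v lvl) \<Rightarrow> 'v constr set \<Rightarrow> bool" where
  "sat \<theta> C = (\<forall>(a, b) \<in> C. leqv (lsubst \<theta> a) (lsubst \<theta> b))"

definition sdom :: "('v \<Rightarrow> 'v lvl) \<Rightarrow> 'v set" where
  "sdom \<theta> = {i. \<theta> i \<noteq> LVar i}"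

definition srange :: "('v \<Rightarrow> 'v lvl) \<Rightarrow> 'v set" where
  "srange \<theta> = (\<Union>i \<in> sdom \<theta>. lvars (\<theta> i))"

definition svars :: "('v \<Rightarrow> 'v lvl) \<Rightarrow> 'v set" where
  "svars \<theta> = sdom \<theta> \<union> srange \<theta>"

definition shat :: "('v::linorder \<Rightarrow> 'v lvl) \<Rightarrow> 'v \<Rightarrow> 'v lvl" where
  "shat \<theta> = (\<lambda>i. if i \<in> sdom \<theta> then lhat (\<theta> i) else LVar i)"

definition ssubst1 :: "('v \<Rightarrow> 'v lvl) \<Rightarrow> 'v lvl \<Rightarrow> 'v \<Rightarrow> 'v \<Rightarrow> 'v lvl" where
  "ssubst1 \<theta> l j = (\<lambda>i. if i \<in> sdom \<theta> then lsubst1 (\<theta> i) l j else LVar i)"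

datatype 'v ustate = St "'v constr set" "'v \<Rightarrow> 'v lvl" | Bot

text \<open>\<open>z \<squnion> i\<close> in normal form, i.e. \<open>s^0 z \<squnion> s^0 i\<close>.\<close>
abbreviation zj :: "'v \<Rightarrow> 'v lvl" where
  "zj i \<equiv> LMax LZ (LVar i)"

inductive ustep :: "('v::linorder) set \<Rightarrow> 'v ustate \<Rightarrow> 'v ustate \<Rightarrow> bool"
  for Fr :: "'v set" where
  trivial: "ustep Fr (St (insert (l, l) C) \<theta>) (St C \<theta>)"
| orient: "l' = LZ \<or> (\<exists>i. l' = zj i) \<Longrightarrow>
     ustep Fr (St (insert (l, l') C) \<theta>) (St (insert (l', l) C) \<theta>)"
| elim1: "i \<notin> lvars l \<Longrightarrow>
     ustep Fr (St (insert (zj i, l) C) \<theta>)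
              (St (Chat (Csubst1 C l i)) ((shat (ssubst1 \<theta> l i))(i := l)))"
| elim2: "i' \<in> Fr - ({i} \<union> lvars l \<union> Cvars C \<union> svars \<theta>) \<Longrightarrow> LVar i \<in> summands l \<Longrightarrow>
     l' = lsubst1 l (LVar i') i \<Longrightarrow>
     ustep Fr (St (insert (zj i, l) C) \<theta>)
              (St (Chat (Csubst1 C l' i)) ((shat (ssubst1 \<theta> l' i))(i := l')))"
| decompose: "sorted_wrt (<) V \<Longrightarrow>
     ustep Fr (St (insert (LZ, lvl_of (0, map (\<lambda>i. (i, 0)) V)) C) \<theta>)
              (St ((\<lambda>i. (zj i, LZ)) ` set V \<union> C) \<theta>)"
| clash: "n \<noteq> 0 \<Longrightarrow> (spow n (LVar i) \<in> summands l \<or> spow n LZ \<in> summands l) \<Longrightarrow>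
     ustep Fr (St (insert (LZ, l) C) \<theta>) Bot"

end

theory Submission
  imports Defs "HOL-Library.Product_Lexorder"
begin

text \<open>Evaluating a level in \<open>\<nat>\<close> under a valuation of its variables (\<open>z \<mapsto> 0\<close>, \<open>s \<mapsto> +1\<close>,
  \<open>\<squnion> \<mapsto> max\<close>) respects \<open>\<simeq>\<close>, so a unifier \<open>\<theta>\<close> of \<open>C\<close> gives a valuation satisfying \<open>C\<close> in \<open>\<nat>\<close>.
  Every unification step preserves the existence of such a valuation: normalisation does not
  change values, eliminating \<open>i\<close> substitutes a level whose value is that of \<open>i\<close> (in Eliminate 2 the
  fresh variable takes over the old value of \<open>i\<close>), and Decompose only records that the variables
  of \<open>z = z \<squnion> \<dots>\<close> take value \<open>0\<close>. Clash, however, needs a level of value at least \<open>n > 0\<close> to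
  equal \<open>0\<close>, so \<open>\<bottom>\<close> is unreachable from a solvable problem.\<close>

subsection \<open>Evaluation of levels in \<open>\<nat>\<close>\<close>

fun lvl_eval :: "('v \<Rightarrow> nat) \<Rightarrow> 'v lvl \<Rightarrow> nat" where
  "lvl_eval \<rho> (LVar i) = \<rho> i"
| "lvl_eval \<rho> LZ = 0"
| "lvl_eval \<rho> (LS l) = Suc (lvl_eval \<rho> l)"
| "lvl_eval \<rho> (LMax a b) = max (lvl_eval \<rho> a) (lvl_eval \<rho> b)"

lemma leqv_imp_lvl_eval_eq: "leqv a b \<Longrightarrow> lvl_eval \<rho> a = lvl_eval \<rho> b"
  by (induction rule: leqv.induct) auto

lemma spow_0 [simp]: "spow 0 x = x"
  by (simp add: spow_def)

lemma spow_Suc: "spow (Suc n) x = LS (spow n x)"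
  by (simp add: spow_def)

lemma lvl_eval_spow [simp]: "lvl_eval \<rho> (spow n x) = n + lvl_eval \<rho> x"
  by (induction n) (simp_all add: spow_Suc)

lemma lvl_eval_lsubst: "lvl_eval \<rho> (lsubst \<sigma> a) = lvl_eval (\<lambda>i. lvl_eval \<rho> (\<sigma> i)) a"
  by (induction a) auto

lemma lvl_eval_lsubst1: "lvl_eval \<rho> (lsubst1 a l j) = lvl_eval (\<rho>(j := lvl_eval \<rho> l)) a"
  unfolding lsubst1_def lvl_eval_lsubst by (rule arg_cong[where f="\<lambda>r. lvl_eval r a"]) auto

lemma lvl_eval_fun_upd_notin: "j \<notin> lvars a \<Longrightarrow> lvl_eval (\<rho>(j := v)) a = lvl_eval \<rho> a"
  by (induction a) auto

lemma lvl_eval_summand_le: "s \<in> summands l \<Longrightarrow> lvl_eval \<rho> s \<le> lvl_eval \<rho> l"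
  by (induction l rule: summands.induct) auto

lemma lvl_eval_joinr: "xs \<noteq> [] \<Longrightarrow> lvl_eval \<rho> (joinr xs) = Max (lvl_eval \<rho> ` set xs)"
  by (induction xs rule: joinr.induct) auto

lemma lvl_of_conv_joinr: "lvl_of (k, xs) = joinr (spow k LZ # map (\<lambda>(i, n). spow n (LVar i)) xs)"
  by (cases xs) (auto simp: lvl_of_def)

definition nf_eval :: "('v \<Rightarrow> nat) \<Rightarrow> nat \<Rightarrow> ('v \<times> nat) list \<Rightarrow> nat" where
  "nf_eval \<rho> k xs = Max (insert k ((\<lambda>(i, n). n + \<rho> i) ` set xs))"

lemma nf_eval_ge: "(i, n) \<in> set xs \<Longrightarrow> n + \<rho> i \<le> nf_eval \<rho> k xs"
  unfolding nf_eval_def by (rule Max_ge) force+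

lemma lvl_eval_lvl_of: "lvl_eval \<rho> (lvl_of (k, xs)) = nf_eval \<rho> k xs"
proof -
  have "lvl_eval \<rho> ` set (map (\<lambda>(i, n). spow n (LVar i)) xs) = (\<lambda>(i, n). n + \<rho> i) ` set xs"
    by (force simp: image_image split: prod.splits)
  then show ?thesis
    by (simp add: lvl_of_conv_joinr lvl_eval_joinr nf_eval_def del: set_map)
qed

declare leqv.intros [intro]
declare ltrans [trans]

definition lvl_le :: "'v lvl \<Rightarrow> 'v lvl \<Rightarrow> bool" where
  "lvl_le a b = leqv (LMax a b) b"

lemma lvl_le_refl: "lvl_le a a"
  unfolding lvl_le_def by blast

lemma lvl_le_trans: "lvl_le a b \<Longrightarrow> lvl_le b c \<Longrightarrow> lvl_le a c"
  unfolding lvl_le_def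
proof -
  assume ab: "leqv (LMax a b) b" and bc: "leqv (LMax b c) c"
  have "leqv (LMax a c) (LMax a (LMax b c))" using bc by blast
  also have "leqv \<dots> (LMax (LMax a b) c)" by blast
  also have "leqv \<dots> (LMax b c)" using ab by blast
  also have "leqv \<dots> c" using bc .
  finally show "leqv (LMax a c) c" .
qed

lemma lvl_le_antisym: "lvl_le a b \<Longrightarrow> lvl_le b a \<Longrightarrow> leqv a b"
  unfolding lvl_le_def
proof -
  assume ab: "leqv (LMax a b) b" and ba: "leqv (LMax b a) a"
  have "leqv a (LMax b a)" using ba by blast
  also have "leqv \<dots> (LMax a b)" by blast
  also have "leqv \<dots> b" using ab .
  finally show ?thesis .
qed

lemma lvl_le_LMaxI: "lvl_le a c \<Longrightarrow> lvl_le b c \<Longrightarrow> lvl_le (LMax a b) c"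
  unfolding lvl_le_def
proof -
  assume ac: "leqv (LMax a c) c" and bc: "leqv (LMax b c) c"
  have "leqv (LMax (LMax a b) c) (LMax a (LMax b c))" by blast
  also have "leqv \<dots> (LMax a c)" using bc by blast
  also have "leqv \<dots> c" using ac .
  finally show "leqv (LMax (LMax a b) c) c" .
qed

lemma lvl_le_LMax1: "lvl_le a (LMax a b)"
  unfolding lvl_le_def
proof -
  have "leqv (LMax a (LMax a b)) (LMax (LMax a a) b)" by blast
  also have "leqv \<dots> (LMax a b)" by blast
  finally show "leqv (LMax a (LMax a b)) (LMax a b)" .
qed

lemma lvl_le_LMax2: "lvl_le b (LMax a b)"
  using lvl_le_LMax1[of b a] unfolding lvl_le_def by (meson lcomm lcongMax lrefl ltrans)

lemma lvl_le_LZ: "lvl_le LZ x"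
  unfolding lvl_le_def by (meson lcomm lzero ltrans)

lemma lvl_le_LS: "lvl_le a (LS a)"
  unfolding lvl_le_def by blast

lemma lvl_le_LS_mono: "lvl_le a b \<Longrightarrow> lvl_le (LS a) (LS b)"
  unfolding lvl_le_def by (meson lcongS lsdist ltrans lsym)

lemma lvl_le_spow_mono: "n \<le> m \<Longrightarrow> lvl_le (spow n x) (spow m x)"
proof (induction m)
  case (Suc m)
  then show ?case by (metis le_SucE lvl_le_LS lvl_le_refl lvl_le_trans spow_Suc)
qed (simp add: lvl_le_refl)

lemma lvl_le_spow_LZ: "lvl_le (spow n LZ) (spow n x)"
  by (induction n) (simp_all add: lvl_le_LZ spow_Suc lvl_le_LS_mono)

lemma lvl_le_joinr_mem: "x \<in> set ys \<Longrightarrow> lvl_le x (joinr ys)"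
proof (induction ys rule: joinr.induct)
  case (3 y z zs)
  then show ?case using lvl_le_LMax1 lvl_le_LMax2 lvl_le_trans by fastforce
qed (auto simp: lvl_le_refl)

lemma lvl_le_joinr:
  "xs \<noteq> [] \<Longrightarrow> \<forall>x\<in>set xs. \<exists>y\<in>set ys. lvl_le x y \<Longrightarrow> lvl_le (joinr xs) (joinr ys)"
proof (induction xs rule: joinr.induct)
  case (2 x)
  then show ?case using lvl_le_joinr_mem lvl_le_trans by fastforce
next
  case (3 x y zs)
  then show ?case
    using lvl_le_joinr_mem lvl_le_trans lvl_le_LMaxI
    by (metis joinr.simps(3) list.discI list.set_intros(1,2))
qed simp

lemma joinr_LS: "xs \<noteq> [] \<Longrightarrow> leqv (LS (joinr xs)) (joinr (map LS xs))"
proof (induction xs rule: joinr.induct)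
  case (3 x y zs)
  then show ?case by simp (meson lcongMax lrefl lsdist ltrans)
qed auto

lemma joinr_append:
  assumes "xs \<noteq> []" and "ys \<noteq> []"
  shows "leqv (joinr (xs @ ys)) (LMax (joinr xs) (joinr ys))"
proof (rule lvl_le_antisym)
  have "lvl_le x (LMax (joinr xs) (joinr ys))" if "x \<in> set (xs @ ys)" for x
    using that lvl_le_joinr_mem lvl_le_LMax1 lvl_le_LMax2 lvl_le_trans by fastforce
  then have "lvl_le (joinr (xs @ ys)) (joinr [LMax (joinr xs) (joinr ys)])"
    using assms by (intro lvl_le_joinr) auto
  then show "lvl_le (joinr (xs @ ys)) (LMax (joinr xs) (joinr ys))" by simp
  show "lvl_le (LMax (joinr xs) (joinr ys)) (joinr (xs @ ys))"
    using assms by (intro lvl_le_LMaxI lvl_le_joinr) (auto intro: lvl_le_refl)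
qed

subsection \<open>Existence and uniqueness of normal forms\<close>

text \<open>An atom \<open>(n, None)\<close> stands for \<open>s\<^sup>n z\<close> and \<open>(n, Some i)\<close> for \<open>s\<^sup>n i\<close>.\<close>

fun atoms :: "'v lvl \<Rightarrow> (nat \<times> 'v option) list" where
  "atoms (LVar i) = [(0, Some i)]"
| "atoms LZ = [(0, None)]"
| "atoms (LS l) = map (\<lambda>(n, q). (Suc n, q)) (atoms l)"
| "atoms (LMax a b) = atoms a @ atoms b"

fun atom_lvl :: "nat \<times> 'v option \<Rightarrow> 'v lvl" where
  "atom_lvl (n, None) = spow n LZ"
| "atom_lvl (n, Some i) = spow n (LVar i)"

lemma LS_atom_lvl: "LS (atom_lvl x) = atom_lvl ((\<lambda>(n, q). (Suc n, q)) x)"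
  by (cases x rule: atom_lvl.cases) (auto simp: spow_Suc)

lemma atoms_ne_Nil [simp]: "atoms l \<noteq> []"
  by (induction l) auto

lemma leqv_joinr_atoms: "leqv l (joinr (map atom_lvl (atoms l)))"
proof (induction l)
  case (LS l)
  have "leqv (LS l) (LS (joinr (map atom_lvl (atoms l))))" using LS by blast
  also have "leqv \<dots> (joinr (map LS (map atom_lvl (atoms l))))" by (rule joinr_LS) simp
  also have "map LS (map atom_lvl (atoms l)) = map atom_lvl (atoms (LS l))"
    by (simp add: LS_atom_lvl)
  finally show ?case .
next
  case (LMax a b)
  have "leqv (LMax a b) (LMax (joinr (map atom_lvl (atoms a))) (joinr (map atom_lvl (atoms b))))"
    using LMax by blast
  also have "leqv \<dots> (joinr (map atom_lvl (atoms (LMax a b))))"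
    by simp (rule lsym, rule joinr_append, auto)
  finally show ?case .
qed auto

definition atom_vars :: "(nat \<times> 'v option) list \<Rightarrow> 'v set" where
  "atom_vars F = {i. \<exists>n. (n, Some i) \<in> set F}"

definition atom_height :: "(nat \<times> 'v option) list \<Rightarrow> 'v \<Rightarrow> nat" where
  "atom_height F i = Max {n. (n, Some i) \<in> set F}"

definition nf_of_atoms :: "(nat \<times> ('v::linorder) option) list \<Rightarrow> 'v nfdata" where
  "nf_of_atoms F =
     (Max (fst ` set F), map (\<lambda>i. (i, atom_height F i)) (sorted_list_of_set (atom_vars F)))"

lemma finite_atom_vars: "finite (atom_vars F)"
proof -
  have "atom_vars F \<subseteq> (\<lambda>x. the (snd x)) ` set F" unfolding atom_vars_def by force
  then show ?thesis by (rule finite_subset) simp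
qed

lemma finite_atom_heights: "finite {n. (n, Some i) \<in> set F}"
  by (rule finite_subset[of _ "fst ` set F"]) force+

lemma atom_height_mem: "i \<in> atom_vars F \<Longrightarrow> (atom_height F i, Some i) \<in> set F"
  using Max_in[OF finite_atom_heights, of i F] unfolding atom_height_def atom_vars_def by auto

lemma atom_height_ge: "(n, Some i) \<in> set F \<Longrightarrow> n \<le> atom_height F i"
  unfolding atom_height_def by (rule Max_ge[OF finite_atom_heights]) simp

lemma set_nf_of_atoms: "set (snd (nf_of_atoms F)) = (\<lambda>i. (i, atom_height F i)) ` atom_vars F"
  by (simp add: nf_of_atoms_def finite_atom_vars)

lemma nf_wf_nf_of_atoms: "nf_wf (nf_of_atoms F)"
proof -
  have "atom_height F i \<le> Max (fst ` set F)" if "i \<in> atom_vars F" for i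
    using atom_height_mem[OF that] by (intro Max_ge) force+
  then show ?thesis
    unfolding nf_wf_def using set_nf_of_atoms[of F]
    by (auto simp: nf_of_atoms_def comp_def strict_sorted_list_of_set)
qed

lemma nf_of_atoms_le_joinr:
  assumes "F \<noteq> []"
  shows "lvl_le (lvl_of (nf_of_atoms F)) (joinr (map atom_lvl F))"
proof -
  obtain k xs where kxs: "nf_of_atoms F = (k, xs)" by (cases "nf_of_atoms F")
  have "k \<in> fst ` set F" using kxs assms by (auto simp: nf_of_atoms_def intro!: Max_in)
  then obtain q where q: "(k, q) \<in> set F" by force
  have "lvl_le (spow k LZ) (atom_lvl (k, q))"
    using lvl_le_spow_LZ lvl_le_refl by (cases q) auto
  have mem: "(n, Some i) \<in> set F" if "(i, n) \<in> set xs" for i n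
    using that kxs set_nf_of_atoms[of F] atom_height_mem by auto
  have "\<exists>y\<in>set (map atom_lvl F). lvl_le x y"
    if x: "x \<in> set (spow k LZ # map (\<lambda>(i, n). spow n (LVar i)) xs)" for x
  proof -
    consider "x = spow k LZ" | i n where "(i, n) \<in> set xs" "x = spow n (LVar i)"
      using x by auto
    then show ?thesis
    proof cases
      case 1
      then show ?thesis using q \<open>lvl_le (spow k LZ) (atom_lvl (k, q))\<close> by force
    next
      case 2
      show ?thesis
        by (rule bexI[of _ "atom_lvl (n, Some i)"]) (use 2 mem[OF 2(1)] in \<open>auto simp: lvl_le_refl intro: rev_image_eqI\<close>)
    qed
  qed
  then show ?thesis
    unfolding kxs lvl_of_conv_joinr by (intro lvl_le_joinr) auto
qed

lemma joinr_le_nf_of_atoms: "lvl_le (joinr (map atom_lvl F)) (lvl_of (nf_of_atoms F))"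
proof (cases "F = []")
  case True
  then show ?thesis by (simp add: lvl_le_LZ)
next
  case False
  obtain k xs where kxs: "nf_of_atoms F = (k, xs)" by (cases "nf_of_atoms F")
  have "\<exists>y\<in>set (spow k LZ # map (\<lambda>(i, n). spow n (LVar i)) xs). lvl_le (atom_lvl (n, q)) y"
    if nq: "(n, q) \<in> set F" for n q
  proof (cases q)
    case None
    have "n \<le> Max (fst ` set F)" using nq by (intro Max_ge) force+
    then have "n \<le> k" using kxs by (auto simp: nf_of_atoms_def)
    then show ?thesis using None lvl_le_spow_mono by auto
  next
    case (Some i)
    then have "(i, atom_height F i) \<in> set xs"
      using nq kxs set_nf_of_atoms[of F] by (auto simp: atom_vars_def)
    moreover have "lvl_le (atom_lvl (n, q)) (spow (atom_height F i) (LVar i))"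
      using lvl_le_spow_mono[OF atom_height_ge] nq Some by simp
    ultimately show ?thesis by force
  qed
  then show ?thesis
    unfolding kxs lvl_of_conv_joinr using False by (intro lvl_le_joinr) auto
qed

lemma nf_exists: "\<exists>d. nf_wf d \<and> leqv (lvl_of d) l"
  using nf_wf_nf_of_atoms ltrans[OF lvl_le_antisym[OF nf_of_atoms_le_joinr[OF atoms_ne_Nil] joinr_le_nf_of_atoms]
      lsym[OF leqv_joinr_atoms]]
  by blast

text \<open>Uniqueness is needed because \<open>nf_data\<close> is a definite description. The constant of a
  normal form is its value at \<open>0\<close>, and the exponent of \<open>i\<close> is detected by giving \<open>i\<close> a value exceeding that constant.\<close>

lemma nf_eval_zero: "nf_wf (k, xs) \<Longrightarrow> nf_eval (\<lambda>_. 0) k xs = k"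
  unfolding nf_eval_def nf_wf_def by (intro Max_eqI) auto

lemma nf_eval_probe_mem:
  assumes wf: "nf_wf (k, xs)" and i: "(i, n) \<in> set xs"
  shows "nf_eval ((\<lambda>_. 0)(i := Suc k)) k xs = n + Suc k"
proof -
  have d: "distinct (map fst xs)" using wf by (simp add: nf_wf_def strict_sorted_iff)
  have le: "\<forall>(j, m)\<in>set xs. m \<le> k" using wf by (simp add: nf_wf_def)
  show ?thesis unfolding nf_eval_def
  proof (rule Max_eqI)
    fix y assume "y \<in> insert k ((\<lambda>(j, m). m + ((\<lambda>_. 0)(i := Suc k)) j) ` set xs)"
    then show "y \<le> n + Suc k"
      using le eq_key_imp_eq_value[OF d i] by (auto split: if_splits)
  qed (use i in force)+
qed

lemma nf_eval_probe_not_mem: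
  "nf_wf (k, xs) \<Longrightarrow> \<forall>m. (i, m) \<notin> set xs \<Longrightarrow> nf_eval ((\<lambda>_. 0)(i := Suc k)) k xs = k"
  unfolding nf_eval_def nf_wf_def by (intro Max_eqI) (auto split: if_splits)

lemma nf_eval_eq_imp_subset:
  assumes "nf_wf (k, xs)" and "nf_wf (k, ys)" and "\<And>\<rho>. nf_eval \<rho> k xs = nf_eval \<rho> k ys"
  shows "set xs \<subseteq> set ys"
proof
  fix p assume p: "p \<in> set xs"
  obtain i n where pin: "p = (i, n)" by (cases p)
  have "nf_eval ((\<lambda>_. 0)(i := Suc k)) k ys = n + Suc k"
    using nf_eval_probe_mem[OF assms(1)] p pin assms(3) by simp
  then show "p \<in> set ys"
  proof (cases "\<exists>m. (i, m) \<in> set ys")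
    case True
    then obtain m where "(i, m) \<in> set ys" by blast
    with \<open>nf_eval _ k ys = n + Suc k\<close> show ?thesis
      using nf_eval_probe_mem[OF assms(2)] pin by force
  next
    case False
    with \<open>nf_eval _ k ys = n + Suc k\<close> show ?thesis
      using nf_eval_probe_not_mem[OF assms(2)] by simp
  qed
qed

lemma nf_eval_eq_imp_eq:
  assumes wf1: "nf_wf (k1, xs1)" and wf2: "nf_wf (k2, xs2)"
    and eq: "\<And>\<rho>. nf_eval \<rho> k1 xs1 = nf_eval \<rho> k2 xs2"
  shows "(k1, xs1) = (k2, xs2)"
proof -
  have k: "k1 = k2" using eq[of "\<lambda>_. 0"] wf1 wf2 by (simp add: nf_eval_zero)
  have s: "set xs1 = set xs2"
    using nf_eval_eq_imp_subset[OF wf1 wf2[folded k]] nf_eval_eq_imp_subset[OF wf2[folded k] wf1] eq k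
    by auto
  have "sorted_wrt (<) xs1" "sorted_wrt (<) xs2"
    using wf1 wf2 unfolding nf_wf_def sorted_wrt_map
    by (auto intro: sorted_wrt_mono_rel[rotated] simp: less_prod_def)
  then have "xs1 = xs2" using s by (intro strict_sorted_equal) auto
  then show ?thesis using k by simp
qed

lemma nf_data_spec: "nf_wf (nf_data l) \<and> leqv (lvl_of (nf_data l)) l"
  unfolding nf_data_def
proof (rule theI')
  obtain d where d: "nf_wf d" "leqv (lvl_of d) l" using nf_exists by blast
  show "\<exists>!d. nf_wf d \<and> leqv (lvl_of d) l"
  proof (rule ex1I[of _ d])
    fix d' assume d': "nf_wf d' \<and> leqv (lvl_of d') l"
    have "lvl_eval \<rho> (lvl_of d') = lvl_eval \<rho> (lvl_of d)" for \<rho>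
      using d d' leqv_imp_lvl_eval_eq by (metis ltrans lsym)
    then show "d' = d"
      using d d' nf_eval_eq_imp_eq[of "fst d'" "snd d'" "fst d" "snd d"]
      by (cases d, cases d') (simp add: lvl_eval_lvl_of)
  qed (use d in simp)
qed

lemma lvl_eval_nf_data: "lvl_eval \<rho> l = nf_eval \<rho> (fst (nf_data l)) (snd (nf_data l))"
  using leqv_imp_lvl_eval_eq[OF conjunct2[OF nf_data_spec], of \<rho> l]
  by (simp add: lvl_eval_lvl_of[symmetric])

lemma nf_eval_drop_smaller:
  assumes eq: "nf_eval \<rho> k1 xs1 = nf_eval \<rho> k2 xs2"
  shows "nf_eval \<rho> k1 (drop_smaller xs1 xs2) = nf_eval \<rho> k1 xs1"
proof (rule antisym)
  show "nf_eval \<rho> k1 (drop_smaller xs1 xs2) \<le> nf_eval \<rho> k1 xs1"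
    unfolding nf_eval_def drop_smaller_def by (rule Max_mono) auto
  have "nf_eval \<rho> k1 xs1 \<in> insert k1 ((\<lambda>(i, n). n + \<rho> i) ` set xs1)"
    unfolding nf_eval_def by (rule Max_in) auto
  then show "nf_eval \<rho> k1 xs1 \<le> nf_eval \<rho> k1 (drop_smaller xs1 xs2)"
  proof
    assume "nf_eval \<rho> k1 xs1 = k1"
    then show ?thesis unfolding nf_eval_def by simp
  next
    assume "nf_eval \<rho> k1 xs1 \<in> (\<lambda>(i, n). n + \<rho> i) ` set xs1"
    then obtain i n where i: "(i, n) \<in> set xs1" and max: "nf_eval \<rho> k1 xs1 = n + \<rho> i"
      by auto
    show ?thesis
    proof (cases "\<exists>m. (i, m) \<in> set xs2 \<and> n < m")
      case True
      then obtain m where "(i, m) \<in> set xs2" "n < m" by blast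
      then show ?thesis using nf_eval_ge[of i m xs2 \<rho> k2] max eq by simp
    next
      case False
      then have "(i, n) \<in> set (drop_smaller xs1 xs2)" using i by (auto simp: drop_smaller_def)
      then show ?thesis using nf_eval_ge max by metis
    qed
  qed
qed

lemma nf_eval_shift:
  assumes "m \<le> k" and "\<forall>(i, n)\<in>set ys. m \<le> n"
  shows "nf_eval \<rho> (k - m) (map (\<lambda>(i, n). (i, n - m)) ys) = nf_eval \<rho> k ys - m"
proof -
  have "nf_eval \<rho> k ys - m = Max ((\<lambda>x. x - m) ` insert k ((\<lambda>(i, n). n + \<rho> i) ` set ys))"
    unfolding nf_eval_def by (rule mono_Max_commute) (auto simp: mono_def)
  also have "(\<lambda>x. x - m) ` insert k ((\<lambda>(i, n). n + \<rho> i) ` set ys)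
      = insert (k - m) ((\<lambda>(i, n). n + \<rho> i) ` set (map (\<lambda>(i, n). (i, n - m)) ys))"
    using assms by (force simp: image_image)
  finally show ?thesis by (simp add: nf_eval_def)
qed

lemma chat_preserves_eval_eq:
  assumes "lvl_eval \<rho> a = lvl_eval \<rho> b"
  shows "lvl_eval \<rho> (fst (chat (a, b))) = lvl_eval \<rho> (snd (chat (a, b)))"
proof -
  obtain k1 xs1 where d1: "nf_data a = (k1, xs1)" by (cases "nf_data a")
  obtain k2 xs2 where d2: "nf_data b = (k2, xs2)" by (cases "nf_data b")
  have eq: "nf_eval \<rho> k1 xs1 = nf_eval \<rho> k2 xs2"
    using assms lvl_eval_nf_data[of \<rho> a] lvl_eval_nf_data[of \<rho> b] d1 d2 by simp
  define ys1 where "ys1 = drop_smaller xs1 xs2"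
  define ys2 where "ys2 = drop_smaller xs2 xs1"
  define M where "M = {k1, k2} \<union> snd ` set ys1 \<union> snd ` set ys2"
  have Min_le_M: "Min M \<le> n" if "n \<in> M" for n
    using that by (intro Min_le) (simp_all add: M_def)
  have "k1 \<in> M" "k2 \<in> M" "\<And>i n. (i, n) \<in> set ys1 \<Longrightarrow> n \<in> M"
    "\<And>i n. (i, n) \<in> set ys2 \<Longrightarrow> n \<in> M"
    unfolding M_def by force+
  then have "Min M \<le> k1" "Min M \<le> k2"
    "\<forall>(i, n)\<in>set ys1. Min M \<le> n" "\<forall>(i, n)\<in>set ys2. Min M \<le> n"
    by (auto intro!: Min_le_M)
  moreover have "chat (a, b) = (lvl_of (k1 - Min M, map (\<lambda>(i, n). (i, n - Min M)) ys1),
                               lvl_of (k2 - Min M, map (\<lambda>(i, n). (i, n - Min M)) ys2))"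
    by (simp add: chat_def d1 d2 Let_def ys1_def ys2_def M_def)
  ultimately show ?thesis
    using nf_eval_drop_smaller[OF eq] nf_eval_drop_smaller[OF eq[symmetric]] eq
    by (simp add: lvl_eval_lvl_of nf_eval_shift ys1_def ys2_def)
qed

subsection \<open>Unification steps preserve solvability in \<open>\<nat>\<close>\<close>

definition nat_sat :: "('v \<Rightarrow> nat) \<Rightarrow> 'v constr set \<Rightarrow> bool" where
  "nat_sat \<rho> C = (\<forall>(a, b) \<in> C. lvl_eval \<rho> a = lvl_eval \<rho> b)"

fun nat_solvable :: "'v ustate \<Rightarrow> bool" where
  "nat_solvable (St C \<theta>) = (\<exists>\<rho>. nat_sat \<rho> C)"
| "nat_solvable Bot = False"

lemma sat_imp_nat_sat: "sat \<theta> C \<Longrightarrow> nat_sat (\<lambda>i. lvl_eval (\<lambda>_. 0) (\<theta> i)) C"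
  unfolding sat_def nat_sat_def lvl_eval_lsubst[symmetric]
  by (blast intro: leqv_imp_lvl_eval_eq)

lemma nat_sat_Chat: "nat_sat \<rho> C \<Longrightarrow> nat_sat \<rho> (Chat C)"
  unfolding nat_sat_def Chat_def
proof (intro ballI)
  fix p assume C: "\<forall>(a, b)\<in>C. lvl_eval \<rho> a = lvl_eval \<rho> b" and "p \<in> chat ` C"
  then obtain a b where "(a, b) \<in> C" and p: "p = chat (a, b)" by auto
  with C have "lvl_eval \<rho> a = lvl_eval \<rho> b" by auto
  then show "case p of (a, b) \<Rightarrow> lvl_eval \<rho> a = lvl_eval \<rho> b"
    using chat_preserves_eval_eq[of \<rho> a b] p by (simp add: case_prod_beta)
qed

lemma nat_sat_Csubst1:
  "nat_sat \<rho> C \<Longrightarrow> \<rho> i = lvl_eval \<rho> l \<Longrightarrow> nat_sat \<rho> (Csubst1 C l i)"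
  unfolding nat_sat_def Csubst1_def by (auto simp: lvl_eval_lsubst1 fun_upd_idem)

lemma nat_sat_fun_upd_notin:
  assumes "j \<notin> Cvars C"
  shows "nat_sat (\<rho>(j := v)) C = nat_sat \<rho> C"
proof -
  have "lvl_eval (\<rho>(j := v)) a = lvl_eval \<rho> a \<and> lvl_eval (\<rho>(j := v)) b = lvl_eval \<rho> b"
    if "(a, b) \<in> C" for a b
  proof -
    have "j \<notin> lvars a \<union> lvars b" using assms that unfolding Cvars_def by blast
    then show ?thesis by (simp add: lvl_eval_fun_upd_notin)
  qed
  then show ?thesis unfolding nat_sat_def by auto
qed

lemma lvl_eval_rename_fresh:
  assumes "j \<notin> lvars l" and "j \<noteq> i"
  shows "lvl_eval (\<rho>(j := \<rho> i)) (lsubst1 l (LVar j) i) = lvl_eval \<rho> l"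
proof -
  have "\<rho>(j := \<rho> i, i := \<rho> i) = (\<rho>(i := \<rho> i))(j := \<rho> i)" using assms(2) by auto
  then show ?thesis
    using assms(1) by (simp add: lvl_eval_lsubst1 lvl_eval_fun_upd_notin)
qed

lemma ustep_nat_solvable: "ustep Fr s s' \<Longrightarrow> nat_solvable s \<Longrightarrow> nat_solvable s'"
proof (induction rule: ustep.induct)
  case (trivial l C \<theta>)
  then show ?case by (auto simp: nat_sat_def)
next
  case (orient l' l C \<theta>)
  then obtain \<rho> where "nat_sat \<rho> (insert (l, l') C)" by auto
  then have "nat_sat \<rho> (insert (l', l) C)" by (simp add: nat_sat_def)
  then show ?case by auto
next
  case (elim1 i l C \<theta>)
  then obtain \<rho> where "nat_sat \<rho> (insert (zj i, l) C)" by auto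
  then have "nat_sat \<rho> C" and "\<rho> i = lvl_eval \<rho> l" by (simp_all add: nat_sat_def)
  then have "nat_sat \<rho> (Chat (Csubst1 C l i))" by (intro nat_sat_Chat nat_sat_Csubst1)
  then show ?case by auto
next
  case (elim2 i' i l C \<theta> l')
  then obtain \<rho> where "nat_sat \<rho> (insert (zj i, l) C)" by auto
  then have C: "nat_sat \<rho> C" and i: "\<rho> i = lvl_eval \<rho> l" by (simp_all add: nat_sat_def)
  define \<rho>' where "\<rho>' = \<rho>(i' := \<rho> i)"
  have "nat_sat \<rho>' C"
    using C elim2.hyps(1) by (simp add: \<rho>'_def nat_sat_fun_upd_notin)
  moreover have "\<rho>' i = lvl_eval \<rho>' l'"
    using i elim2.hyps lvl_eval_rename_fresh[of i' l i \<rho>] by (auto simp: \<rho>'_def)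
  ultimately have "nat_sat \<rho>' (Chat (Csubst1 C l' i))" by (intro nat_sat_Chat nat_sat_Csubst1)
  then show ?case by auto
next
  case (decompose V C \<theta>)
  then obtain \<rho> where \<rho>: "nat_sat \<rho> (insert (LZ, lvl_of (0, map (\<lambda>i. (i, 0)) V)) C)" by auto
  have "\<rho> i = 0" if "i \<in> set V" for i
    using \<rho> nf_eval_ge[of i 0 "map (\<lambda>i. (i, 0)) V" \<rho> 0] that
    by (simp add: nat_sat_def lvl_eval_lvl_of)
  with \<rho> have "nat_sat \<rho> ((\<lambda>i. (zj i, LZ)) ` set V \<union> C)" by (auto simp: nat_sat_def)
  then show ?case by auto
next
  case (clash n i l C \<theta>)
  then obtain \<rho> where "nat_sat \<rho> (insert (LZ, l) C)" by auto
  then have "lvl_eval \<rho> l = 0" by (simp add: nat_sat_def)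
  moreover from clash.hyps(2) obtain x where "spow n x \<in> summands l" by blast
  then have "n \<le> lvl_eval \<rho> l" using lvl_eval_summand_le[of _ l \<rho>] by fastforce
  ultimately show ?case using clash.hyps(1) by simp
qed

lemma rtranclp_ustep_nat_solvable:
  "(ustep Fr)\<^sup>*\<^sup>* s s' \<Longrightarrow> nat_solvable s \<Longrightarrow> nat_solvable s'"
  by (induction rule: rtranclp_induct) (auto intro: ustep_nat_solvable)

theorem mainTheorem10:
  fixes Ifresh :: "('v::linorder) set" and C :: "'v constr set"
  assumes "infinite Ifresh" and "Ifresh \<noteq> UNIV"
    and "finite C" and "\<forall>c \<in> C. c_nf c"
    and "Cvars C \<inter> Ifresh = {}"
    and "(ustep Ifresh)\<^sup>*\<^sup>* (St C LVar) Bot"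
  shows "\<not> (\<exists>\<theta>. sat \<theta> C)"
proof
  assume "\<exists>\<theta>. sat \<theta> C"
  then have "nat_solvable (St C LVar)" using sat_imp_nat_sat by auto
  then show False using rtranclp_ustep_nat_solvable[OF assms(6)] by simp
qed

end
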